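(* The Nield-Kuznetsov function $N_{W}(a,x)$ and the complementary version $\hat N_W(a,x)$ are related by \[ N_{W}(a,x)=c_{0}^{+}(a)W(a,x)+c_{0}^{-}(a)W(a,-x)-\hat{N}_{W}(a,x), \] where \[ c_{0}^{\pm}(a)=\mp \hat{N}_{W}'(a,0)W(a,0) - \hat{N}_{W}(a,0)W'(a,0). \]
   Context: $a$ is real; $W(a,\pm x)$ are the Weber parabolic cylinder functions (DLMF Sect. 12.14), numerically satisfactory solutions of $y''+(\tfrac14 x^2-a)y=0$, with $W(a,0)W'(a,0)=-\tfrac12$. The Nield-Kuznetsov function of the first kind is $N_{W}(a,x)=W(a,x) \int_{0}^x W(a,-t)dt-W(a,-x)\int_{0}^x W(a,t)dt$, a solution of $y''+(\tfrac14 x^2-a)y=-1$ with $N_W(a,0)=N_W'(a,0)=0$. The complementary Nield-Kuznetsov function is $\hat{N}_{W}(a,x)=W(a,x)\int_{x}^{\infty} W(a,-t)dt-W(a,-x) \int_{x}^{\infty} W(a,t)dt$, whose negative also solves $y''+(\tfrac14 x^2-a)y=-1$. The solution of this inhomogeneous equation with $y(a,0)=\alpha$, $y'(a,0)=\beta$ is $y=C^{+}W(a,x)+C^{-}W(a,-x)+N_W(a,x)$ with $C^{\pm}=\mp\beta W(a,0)-\alpha W'(a,0)$. *)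

theory Defs
  imports "HOL-Analysis.Analysis"
begin

text \<open>Power-series coefficients of the solution of y'' + (x^2/4 - a) y = 0 with
  y(0) = c0, y'(0) = c1:  (n+2)(n+1) c_{n+2} = a c_n - c_{n-2}/4  (c_{-2} = 0).\<close>
fun pcf_coef :: "real \<Rightarrow> real \<Rightarrow> real \<Rightarrow> nat \<Rightarrow> real" where
  "pcf_coef a c0 c1 0 = c0"
| "pcf_coef a c0 c1 (Suc 0) = c1"
| "pcf_coef a c0 c1 (Suc (Suc n)) =
     (a * pcf_coef a c0 c1 n - (if n \<ge> 2 then pcf_coef a c0 c1 (n - 2) / 4 else 0))
     / (real (n + 2) * real (n + 1))"

definition pcf_w1 :: "real \<Rightarrow> real \<Rightarrow> real" where
  "pcf_w1 a x = (\<Sum>n. pcf_coef a 1 0 n * x ^ n)"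

definition pcf_w2 :: "real \<Rightarrow> real \<Rightarrow> real" where
  "pcf_w2 a x = (\<Sum>n. pcf_coef a 0 1 n * x ^ n)"

text \<open>Initial values of Weber's W (DLMF 12.14.4-5).\<close>
definition W0 :: "real \<Rightarrow> real" where
  "W0 a = 2 powr (-3/4) *
     sqrt (cmod (Gamma (1/4 + \<i> * complex_of_real (a/2)) / Gamma (3/4 + \<i> * complex_of_real (a/2))))"

definition W0' :: "real \<Rightarrow> real" where
  "W0' a = - (2 powr (-1/4) *
     sqrt (cmod (Gamma (3/4 + \<i> * complex_of_real (a/2)) / Gamma (1/4 + \<i> * complex_of_real (a/2)))))"

definition weberW :: "real \<Rightarrow> real \<Rightarrow> real" where
  "weberW a x = W0 a * pcf_w1 a x + W0' a * pcf_w2 a x"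

definition oint :: "real \<Rightarrow> real \<Rightarrow> (real \<Rightarrow> real) \<Rightarrow> real" where
  "oint u v f = (if u \<le> v then integral {u..v} f else - integral {v..u} f)"

definition NW :: "real \<Rightarrow> real \<Rightarrow> real" where
  "NW a x = weberW a x * oint 0 x (\<lambda>t. weberW a (-t))
          - weberW a (-x) * oint 0 x (\<lambda>t. weberW a t)"

definition NW_hat :: "real \<Rightarrow> real \<Rightarrow> real" where
  "NW_hat a x = weberW a x * integral {x..} (\<lambda>t. weberW a (-t))
              - weberW a (-x) * integral {x..} (\<lambda>t. weberW a t)"

end

theory Submission
  imports Defs
begin

text \<open>Splitting the improper integrals at 0 gives
  \<open>NW_hat a x = I\<^sup>- W(a,x) - I\<^sup>+ W(a,-x) - NW a x\<close> with \<open>I\<^sup>\<plusminus> = \<integral>\<^sub>0\<^sup>\<infinity> W(a,\<plusminus>t) dt\<close>;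
  the constants are then read off from the values at 0, using \<open>NW a 0 = NW' a 0 = 0\<close> and the
  Wronskian normalisation \<open>W(a,0) W'(a,0) = -1/2\<close>.

  The analytic input is that the improper integrals exist. For a solution \<open>y\<close> of
  \<open>y'' = -q y\<close> with \<open>q(x) = x\<^sup>2/4 - a\<close>, the energy \<open>y'\<^sup>2/q + y\<^sup>2\<close> is nonincreasing for
  large \<open>x\<close>, so \<open>y' = O(x)\<close>. Then \<open>y = (-y'/q)' - x y'/(2 q\<^sup>2)\<close> is the derivative of a
  function tending to 0 plus a remainder that is \<open>O(1/x\<^sup>2)\<close>, hence absolutely integrable.\<close>

definition weber_ode_solution :: "real \<Rightarrow> (real \<Rightarrow> real) \<Rightarrow> (real \<Rightarrow> real) \<Rightarrow> bool" where
  "weber_ode_solution a y y' \<longleftrightarrow>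
     (\<forall>x. (y has_real_derivative y' x) (at x) \<and> (y' has_real_derivative (a - x^2 / 4) * y x) (at x))"

lemma weber_ode_solution_lincomb:
  assumes "weber_ode_solution a y y'" and "weber_ode_solution a z z'"
  shows "weber_ode_solution a (\<lambda>x. c * y x + d * z x) (\<lambda>x. c * y' x + d * z' x)"
  using assms unfolding weber_ode_solution_def
  by (auto intro!: derivative_eq_intros simp: algebra_simps)

lemma weber_ode_solution_reflect:
  assumes "weber_ode_solution a y y'"
  shows "weber_ode_solution a (\<lambda>x. y (- x)) (\<lambda>x. - y' (- x))"
  unfolding weber_ode_solution_def
proof
  fix x :: real
  have "(y has_real_derivative y' (- x)) (at (- x))"
    and "(y' has_real_derivative (a - (- x)^2 / 4) * y (- x)) (at (- x))"
    using assms unfolding weber_ode_solution_def by blast+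
  note chain = DERIV_chain2[OF this(1) DERIV_minus[OF DERIV_ident]]
    DERIV_chain2[OF this(2) DERIV_minus[OF DERIV_ident]]
  from chain show "((\<lambda>x. y (- x)) has_real_derivative - y' (- x)) (at x) \<and>
      ((\<lambda>x. - y' (- x)) has_real_derivative (a - x^2 / 4) * y (- x)) (at x)"
    by (auto intro!: derivative_eq_intros)
qed

lemma weber_ode_solution_continuous_on:
  assumes "weber_ode_solution a y y'"
  shows "continuous_on S y" and "continuous_on S y'"
  using assms unfolding weber_ode_solution_def
  by (meson DERIV_isCont continuous_at_imp_continuous_on)+

section \<open>Improper integrals over half-lines\<close>

lemma has_integral_Ici_iff_tendsto:
  fixes f :: "real \<Rightarrow> 'a::banach"
  assumes "\<And>b. f integrable_on {c..b}"
  shows "(f has_integral l) {c..} \<longleftrightarrow> ((\<lambda>b. integral {c..b} f) \<longlongrightarrow> l) at_top"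
proof -
  let ?g = "\<lambda>x. if x \<in> {c..} then f x else 0"
  have restrict: "integral (cbox a b) ?g = integral {c..b} f" if "a \<le> c" for a b
  proof -
    have "{c..} \<inter> cbox a b = {c..b}" using that by auto
    then show ?thesis by (metis integral_restrict_Int)
  qed
  have ball_subset: "ball 0 B \<subseteq> cbox a b \<longleftrightarrow> a \<le> - B \<and> B \<le> b" if "B > 0" for a b B :: real
    using that by (simp add: ball_eq_greaterThanLessThan greaterThanLessThan_subseteq_atLeastAtMost_iff)
  have "?g integrable_on cbox a b" for a b
  proof -
    have "{c..} \<inter> cbox a b = {max a c..b}" by auto
    then have "f integrable_on {c..} \<inter> cbox a b"
      using integrable_on_subinterval[OF assms[of b]] by simp
    then show ?thesis by (simp only: integrable_restrict_Int)
  qed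
  moreover have "(\<forall>e>0. \<exists>B>0. \<forall>a b. ball 0 B \<subseteq> cbox a b \<longrightarrow> norm (integral (cbox a b) ?g - l) < e)
      \<longleftrightarrow> ((\<lambda>b. integral {c..b} f) \<longlongrightarrow> l) at_top"
  proof
    assume H: "\<forall>e>0. \<exists>B>0. \<forall>a b. ball 0 B \<subseteq> cbox a b \<longrightarrow> norm (integral (cbox a b) ?g - l) < e"
    show "((\<lambda>b. integral {c..b} f) \<longlongrightarrow> l) at_top"
    proof (rule tendstoI)
      fix e :: real assume "e > 0"
      with H obtain B where "B > 0"
        and B: "\<And>a b. ball 0 B \<subseteq> cbox a b \<Longrightarrow> norm (integral (cbox a b) ?g - l) < e"
        by blast
      have "dist (integral {c..b} f) l < e" if "B \<le> b" for b
        using B[of "- (B + \<bar>c\<bar>)" b] restrict[of "- (B + \<bar>c\<bar>)" b] ball_subset \<open>B > 0\<close> that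
        by (simp add: dist_norm)
      then show "\<forall>\<^sub>F b in at_top. dist (integral {c..b} f) l < e"
        by (rule eventually_at_top_linorderI)
    qed
  next
    assume "((\<lambda>b. integral {c..b} f) \<longlongrightarrow> l) at_top"
    show "\<forall>e>0. \<exists>B>0. \<forall>a b. ball 0 B \<subseteq> cbox a b \<longrightarrow> norm (integral (cbox a b) ?g - l) < e"
    proof (intro allI impI)
      fix e :: real assume "e > 0"
      with \<open>(_ \<longlongrightarrow> l) at_top\<close> obtain Y where Y: "\<And>b. Y \<le> b \<Longrightarrow> dist (integral {c..b} f) l < e"
        unfolding tendsto_iff eventually_at_top_linorder by blast
      have "norm (integral (cbox a b) ?g - l) < e"
        if "ball 0 (\<bar>Y\<bar> + \<bar>c\<bar> + 1) \<subseteq> cbox a b" for a b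
      proof -
        have "a \<le> c" and "Y \<le> b"
          using that ball_subset[of "\<bar>Y\<bar> + \<bar>c\<bar> + 1" a b] by linarith+
        then show ?thesis using restrict Y by (simp add: dist_norm)
      qed
      then show "\<exists>B>0. \<forall>a b. ball 0 B \<subseteq> cbox a b \<longrightarrow> norm (integral (cbox a b) ?g - l) < e"
        by (intro exI[of _ "\<bar>Y\<bar> + \<bar>c\<bar> + 1"]) auto
    qed
  qed
  ultimately show ?thesis by (simp add: has_integral_alt')
qed

lemma fundamental_theorem_of_calculus_Ici:
  fixes F f :: "real \<Rightarrow> real"
  assumes deriv: "\<And>x. c \<le> x \<Longrightarrow> (F has_real_derivative f x) (at x within {c..})"
    and lim: "(F \<longlongrightarrow> l) at_top"
  shows "(f has_integral (l - F c)) {c..}"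
proof -
  have FTC: "(f has_integral (F b - F c)) {c..b}" if "c \<le> b" for b
  proof (rule fundamental_theorem_of_calculus[OF that])
    fix x assume "x \<in> {c..b}"
    then have "(F has_real_derivative f x) (at x within {c..b})"
      by (auto intro: DERIV_subset[OF deriv])
    then show "(F has_vector_derivative f x) (at x within {c..b})"
      by (simp add: has_real_derivative_iff_has_vector_derivative)
  qed
  have "f integrable_on {c..b}" for b
    using FTC[of b] by (cases "c \<le> b") auto
  moreover have "((\<lambda>b. integral {c..b} f) \<longlongrightarrow> l - F c) at_top"
  proof (rule Lim_transform_eventually)
    show "((\<lambda>b. F b - F c) \<longlongrightarrow> l - F c) at_top"
      by (intro tendsto_intros lim)
    show "\<forall>\<^sub>F b in at_top. F b - F c = integral {c..b} f"
      by (intro eventually_at_top_linorderI[of c]) (metis FTC integral_unique)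
  qed
  ultimately show ?thesis by (simp add: has_integral_Ici_iff_tendsto)
qed

lemma absolutely_integrable_on_Ici_inverse_square_bound:
  fixes g :: "real \<Rightarrow> real"
  assumes "0 < c" and "continuous_on {c..} g" and bound: "\<And>x. c \<le> x \<Longrightarrow> \<bar>g x\<bar> \<le> C / x^2"
  shows "g absolutely_integrable_on {c..}"
proof (rule measurable_bounded_by_integrable_imp_absolutely_integrable)
  show "g \<in> borel_measurable (lebesgue_on {c..})"
    using assms(2) by (rule continuous_imp_measurable_on_sets_lebesgue) simp
  have "((\<lambda>x. C / x^2) has_integral (0 - (- C / c))) {c..}"
  proof (rule fundamental_theorem_of_calculus_Ici)
    show "((\<lambda>x. - C / x) has_real_derivative C / x^2) (at x within {c..})" if "c \<le> x" for x
      using that \<open>0 < c\<close> by (auto intro!: derivative_eq_intros simp: power2_eq_square)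
    show "((\<lambda>x. - C / x) \<longlongrightarrow> 0) at_top"
      by (intro tendsto_divide_0[OF tendsto_const] filterlim_at_top_imp_at_infinity filterlim_ident)
  qed
  then show "(\<lambda>x. C / x^2) integrable_on {c..}" by blast
qed (use bound in auto)

lemma integral_Ici_eq_minus_oint:
  fixes f :: "real \<Rightarrow> real"
  assumes int: "\<And>c. f integrable_on {c..}"
  shows "integral {x..} f = integral {u..} f - oint u x f"
proof -
  have split: "integral {s..} f = integral {s..t} f + integral {t..} f" if "s \<le> t" for s t
  proof -
    have "(f has_integral (integral {s..t} f + integral {t..} f)) ({s..t} \<union> {t..})"
    proof (rule has_integral_Un)
      show "(f has_integral integral {s..t} f) {s..t}"
        using integrable_on_subinterval[OF int[of s]] by (simp add: has_integral_integral)
      show "(f has_integral integral {t..} f) {t..}"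
        using int by (simp add: has_integral_integral)
      have "{s..t} \<inter> {t..} = {t}" using that by auto
      then show "negligible ({s..t} \<inter> {t..})" by simp
    qed
    moreover have "{s..t} \<union> {t..} = {s..}" using that by auto
    ultimately show ?thesis by (simp add: integral_unique)
  qed
  show ?thesis
    using split[of u x] split[of x u] by (auto simp: oint_def)
qed

lemma oint_eq_integral_diff:
  fixes f :: "real \<Rightarrow> real"
  assumes "continuous_on UNIV f" and "m \<le> u" and "m \<le> x"
  shows "oint u x f = integral {m..x} f - integral {m..u} f"
proof -
  have int: "f integrable_on {m..b}" for b
    using assms(1) by (rule integrable_continuous_interval[OF continuous_on_subset]) simp
  show ?thesis
  proof (cases "u \<le> x")
    case True
    then show ?thesis
      using Henstock_Kurzweil_Integration.integral_combine[OF \<open>m \<le> u\<close> True int]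
      by (simp add: oint_def)
  next
    case False
    then show ?thesis
      using Henstock_Kurzweil_Integration.integral_combine[OF \<open>m \<le> x\<close> _ int, of u]
      by (simp add: oint_def)
  qed
qed

lemma has_real_derivative_oint:
  fixes f :: "real \<Rightarrow> real"
  assumes cont: "continuous_on UNIV f"
  shows "((\<lambda>x. oint u x f) has_real_derivative f x) (at x)"
proof -
  define m where "m = min u x - 1"
  have "((\<lambda>t. integral {m..t} f) has_real_derivative f x) (at x within {m..x + 1})"
    unfolding m_def by (intro integral_has_real_derivative continuous_on_subset[OF cont]) auto
  then have "((\<lambda>t. integral {m..t} f - integral {m..u} f) has_real_derivative f x) (at x)"
    using at_within_Icc_at[of m x "x + 1"] unfolding m_def by (auto intro!: derivative_eq_intros)
  then show ?thesis
  proof (rule has_field_derivative_transform_within_open[where S = "{m<..}"])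
    show "integral {m..t} f - integral {m..u} f = oint u t f" if "t \<in> {m<..}" for t
      using that oint_eq_integral_diff[OF cont, of m u t] unfolding m_def by simp
  qed (auto simp: m_def)
qed

section \<open>Integrability of solutions at infinity\<close>

lemma weber_potential_bounds:
  fixes a x :: real
  assumes "3 * (\<bar>a\<bar> + 1) \<le> x"
  shows "0 < x" and "x^2 / 8 \<le> x^2 / 4 - a" and "x^2 / 4 - a \<le> x^2 / 2"
proof -
  have "9 * (\<bar>a\<bar> + 1) * 1 \<le> 9 * (\<bar>a\<bar> + 1) * (\<bar>a\<bar> + 1)"
    by (intro mult_left_mono) auto
  also have "\<dots> = (3 * (\<bar>a\<bar> + 1))^2" by (simp add: power2_eq_square algebra_simps)
  also have "\<dots> \<le> x^2" using assms by (intro power_mono) auto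
  finally have "9 * \<bar>a\<bar> + 9 \<le> x^2" by simp
  then show "0 < x" and "x^2 / 8 \<le> x^2 / 4 - a" and "x^2 / 4 - a \<le> x^2 / 2"
    using assms by (auto simp: abs_if split: if_splits)
qed

lemma weber_ode_solution_deriv_bound:
  assumes sol: "weber_ode_solution a y y'" and X: "3 * (\<bar>a\<bar> + 1) \<le> X"
  shows "\<exists>K\<ge>0. \<forall>x\<ge>X. \<bar>y' x\<bar> \<le> K * x"
proof -
  define q where "q x = x^2 / 4 - a" for x
  note q_bounds = weber_potential_bounds[OF order_trans[OF X], folded q_def]
  have q_pos: "0 < q x" if "X \<le> x" for x
  proof -
    have "0 < x^2 / 8" using q_bounds(1)[OF that] by simp
    then show ?thesis using q_bounds(2)[OF that] by linarith
  qed
  define E where "E x = y' x * y' x / q x + y x * y x" for x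
  have E_deriv: "(E has_real_derivative - (y' x * y' x * x / (2 * (q x * q x)))) (at x)"
    if "X \<le> x" for x
  proof -
    have "(y has_real_derivative y' x) (at x)" "(y' has_real_derivative - q x * y x) (at x)"
      using sol unfolding weber_ode_solution_def q_def by auto
    moreover have "(q has_real_derivative x / 2) (at x)"
      unfolding q_def[abs_def] by (auto intro!: derivative_eq_intros)
    ultimately have "(E has_real_derivative
        ((- q x * y x * y' x + - q x * y x * y' x) * q x - y' x * y' x * (x / 2)) / (q x * q x)
        + (y' x * y x + y' x * y x)) (at x)"
      unfolding E_def[abs_def] using q_pos[OF that]
      by (intro DERIV_add DERIV_divide DERIV_mult) simp_all
    moreover have "((- q x * y x * y' x + - q x * y x * y' x) * q x - y' x * y' x * (x / 2))
        / (q x * q x) + (y' x * y x + y' x * y x) = - (y' x * y' x * x / (2 * (q x * q x)))"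
      using q_pos[OF that] by (simp add: field_simps)
    ultimately show ?thesis by simp
  qed
  have E_decreasing: "E x \<le> E X" if "X \<le> x" for x
  proof (rule DERIV_nonpos_imp_nonincreasing[OF that])
    fix t assume "X \<le> t" "t \<le> x"
    then have "0 \<le> y' t * y' t * t / (2 * (q t * q t))"
      using q_bounds(1)[OF \<open>X \<le> t\<close>] by simp
    then show "\<exists>D. (E has_real_derivative D) (at t) \<and> D \<le> 0"
      using E_deriv[OF \<open>X \<le> t\<close>] by force
  qed
  have "0 \<le> E X" unfolding E_def using q_pos[of X] by simp
  have "\<bar>y' x\<bar> \<le> sqrt (E X) * x" if "X \<le> x" for x
  proof -
    have "y' x * y' x / q x \<le> E X"
      using E_decreasing[OF that] zero_le_square[of "y x"] unfolding E_def by linarith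
    then have "y' x ^ 2 \<le> E X * q x" using q_pos[OF that] by (simp add: divide_le_eq power2_eq_square)
    also have "\<dots> \<le> E X * x^2"
      using q_bounds(3)[OF that] q_pos[OF that] \<open>0 \<le> E X\<close> by (intro mult_left_mono) linarith+
    also have "\<dots> = (sqrt (E X) * x)^2"
      using \<open>0 \<le> E X\<close> by (simp add: power_mult_distrib)
    finally have "\<bar>y' x\<bar>^2 \<le> (sqrt (E X) * x)^2" by simp
    then show ?thesis
      by (rule power2_le_imp_le) (use q_bounds(1)[OF that] \<open>0 \<le> E X\<close> in simp)
  qed
  then show ?thesis using \<open>0 \<le> E X\<close> by (intro exI[of _ "sqrt (E X)"]) simp
qed

lemma weber_ode_solution_integrable_on_Ici:
  assumes sol: "weber_ode_solution a y y'"
  shows "y integrable_on {c..}"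
proof -
  define X where "X = max c (3 * (\<bar>a\<bar> + 1))"
  define q where "q x = x^2 / 4 - a" for x
  have "3 * (\<bar>a\<bar> + 1) \<le> X" unfolding X_def by simp
  note q_bounds = weber_potential_bounds[OF order_trans[OF this], folded q_def]
  have q_pos: "0 < q x" if "X \<le> x" for x
  proof -
    have "0 < x^2 / 8" using q_bounds(1)[OF that] by simp
    then show ?thesis using q_bounds(2)[OF that] by linarith
  qed
  obtain K where "0 \<le> K" and K: "\<And>x. X \<le> x \<Longrightarrow> \<bar>y' x\<bar> \<le> K * x"
    using weber_ode_solution_deriv_bound[OF sol \<open>3 * (\<bar>a\<bar> + 1) \<le> X\<close>] by blast
  define h where "h x = - y' x / q x" for x
  define g where "g x = y' x * x / (2 * (q x * q x))" for x
  have h_deriv: "(h has_real_derivative y x + g x) (at x)" if "X \<le> x" for x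
  proof -
    have "(y' has_real_derivative - q x * y x) (at x)"
      using sol unfolding weber_ode_solution_def q_def by auto
    moreover have "(q has_real_derivative x / 2) (at x)"
      unfolding q_def[abs_def] by (auto intro!: derivative_eq_intros)
    ultimately have "(h has_real_derivative (- (- q x * y x) * q x - - y' x * (x / 2)) / (q x * q x)) (at x)"
      unfolding h_def[abs_def] using q_pos[OF that] by (intro DERIV_divide DERIV_minus) simp_all
    moreover have "(- (- q x * y x) * q x - - y' x * (x / 2)) / (q x * q x) = y x + g x"
      unfolding g_def using q_pos[OF that] by (simp add: field_simps)
    ultimately show ?thesis by simp
  qed
  have "(h \<longlongrightarrow> 0) at_top"
  proof (rule Lim_null_comparison)
    have "norm (h x) \<le> 8 * K / x" if "X \<le> x" for x
    proof -
      have "norm (h x) = \<bar>y' x\<bar> / q x" unfolding h_def using q_pos[OF that] by (simp add: abs_divide)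
      also have "\<dots> \<le> (K * x) / (x^2 / 8)"
        by (rule frac_le) (use \<open>0 \<le> K\<close> K[OF that] q_bounds[OF that] in auto)
      also have "\<dots> = 8 * K / x" using q_bounds(1)[OF that] by (simp add: field_simps power2_eq_square)
      finally show ?thesis .
    qed
    then show "\<forall>\<^sub>F x in at_top. norm (h x) \<le> 8 * K / x"
      by (rule eventually_at_top_linorderI)
    show "((\<lambda>x. 8 * K / x) \<longlongrightarrow> 0) at_top"
      by (intro tendsto_divide_0[OF tendsto_const] filterlim_at_top_imp_at_infinity filterlim_ident)
  qed
  then have "((\<lambda>x. y x + g x) has_integral (0 - h X)) {X..}"
    using h_deriv by (intro fundamental_theorem_of_calculus_Ici) (auto intro: has_field_derivative_at_within)
  moreover have "g absolutely_integrable_on {X..}"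
  proof (rule absolutely_integrable_on_Ici_inverse_square_bound)
    show "0 < X" using q_bounds(1) by simp
    have "continuous_on {X..} q" unfolding q_def by (intro continuous_intros) auto
    then show "continuous_on {X..} g"
      unfolding g_def using weber_ode_solution_continuous_on(2)[OF sol]
      by (intro continuous_intros) (auto dest!: q_pos)
    show "\<bar>g x\<bar> \<le> 32 * K / x^2" if "X \<le> x" for x
    proof -
      have "\<bar>g x\<bar> = \<bar>y' x\<bar> * x / (2 * (q x * q x))"
        unfolding g_def using q_bounds(1)[OF that] q_pos[OF that] by (simp add: abs_mult)
      also have "\<dots> \<le> (K * x) * x / (2 * (x^2 / 8) * (x^2 / 8))"
      proof (rule frac_le)
        show "\<bar>y' x\<bar> * x \<le> K * x * x"
          using K[OF that] q_bounds(1)[OF that] by (intro mult_right_mono) auto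
        have "x^2 / 8 * (x^2 / 8) \<le> q x * q x"
          using q_bounds[OF that] by (intro mult_mono) auto
        then show "2 * (x^2 / 8) * (x^2 / 8) \<le> 2 * (q x * q x)" by simp
      qed (use \<open>0 \<le> K\<close> q_bounds(1)[OF that] in auto)
      also have "\<dots> = 32 * K / x^2"
        using q_bounds(1)[OF that] by (simp add: field_simps power2_eq_square)
      finally show ?thesis .
    qed
  qed
  ultimately have "y integrable_on {X..}"
    using integrable_diff[of "\<lambda>x. y x + g x" "{X..}" g] set_lebesgue_integral_eq_integral(1)
    by fastforce
  moreover have "y integrable_on {c..X}"
    using weber_ode_solution_continuous_on(1)[OF sol] by (rule integrable_continuous_interval)
  moreover have "{c..} = {c..X} \<union> {X..}" and "negligible ({c..X} \<inter> {X..})"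
    unfolding X_def by auto
  ultimately show ?thesis by (metis integrable_Un')
qed

section \<open>The power series solutions and \<open>W(a,x)\<close>\<close>

lemma pcf_coef_add4:
  "pcf_coef a c0 c1 (n + 4) =
     (a * pcf_coef a c0 c1 (n + 2) - pcf_coef a c0 c1 n / 4) / (real (n + 4) * real (n + 3))"
  by (simp add: numeral_eq_Suc)

lemma pcf_coef_geometric_bound:
  fixes \<rho> :: real
  assumes "\<rho> > 0"
  shows "\<exists>K. \<forall>n. \<bar>pcf_coef a c0 c1 n\<bar> \<le> K * \<rho> ^ n"
proof -
  define c where "c = pcf_coef a c0 c1"
  define L where "L = \<bar>a\<bar> / \<rho>^2 + 1 / (4 * \<rho>^4)"
  define N where "N = nat \<lceil>L\<rceil>"
  define K where "K = (\<Sum>k\<le>N + 3. \<bar>c k\<bar> / \<rho>^k)"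
  have "K \<ge> 0" unfolding K_def using assms by (intro sum_nonneg) auto
  have "\<bar>c n\<bar> \<le> K * \<rho>^n" for n
  proof (induction n rule: less_induct)
    case (less n)
    show ?case
    proof (cases "n \<le> N + 3")
      case True
      then have "\<bar>c n\<bar> / \<rho>^n \<le> K"
        unfolding K_def by (intro member_le_sum) (use assms in auto)
      then show ?thesis using assms by (simp add: divide_le_eq mult.commute)
    next
      case False
      define j where "j = n - 4"
      have n: "n = j + 4" and "N \<le> j" using False unfolding j_def by auto
      have "L \<le> real N" unfolding N_def by linarith
      also have "\<dots> \<le> real (j + 4) * 1" using \<open>N \<le> j\<close> by simp
      also have "\<dots> \<le> real (j + 4) * real (j + 3)" by (intro mult_left_mono) auto
      finally have L: "L \<le> real (j + 4) * real (j + 3)" .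
      have "\<bar>a * c (j + 2) - c j / 4\<bar> \<le> \<bar>a\<bar> * \<bar>c (j + 2)\<bar> + \<bar>c j\<bar> / 4"
        by (simp add: abs_mult abs_triangle_ineq4[THEN order_trans])
      also have "\<dots> \<le> \<bar>a\<bar> * (K * \<rho>^(j + 2)) + K * \<rho>^j / 4"
        using less.IH[of "j + 2"] less.IH[of j] n by (intro add_mono mult_left_mono) auto
      also have "\<dots> = K * \<rho>^(j + 4) * L"
        unfolding L_def using assms by (simp add: field_simps power_add eval_nat_numeral)
      also have "\<dots> \<le> K * \<rho>^(j + 4) * (real (j + 4) * real (j + 3))"
        using L assms \<open>K \<ge> 0\<close> by (intro mult_left_mono) auto
      finally show ?thesis
        using n by (simp add: c_def pcf_coef_add4 abs_divide divide_le_eq)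
    qed
  qed
  then show ?thesis unfolding c_def by blast
qed

lemma summable_pcf_coef: "summable (\<lambda>n. pcf_coef a c0 c1 n * x ^ n)"
proof -
  define \<rho> where "\<rho> = 1 / (2 * (\<bar>x\<bar> + 1))"
  have "\<rho> > 0" unfolding \<rho>_def by (simp add: add_pos_nonneg)
  then obtain K where K: "\<And>n. \<bar>pcf_coef a c0 c1 n\<bar> \<le> K * \<rho> ^ n"
    using pcf_coef_geometric_bound by blast
  have "\<rho> * \<bar>x\<bar> < 1" unfolding \<rho>_def by (simp add: field_simps)
  show ?thesis
  proof (rule summable_comparison_test)
    show "\<exists>N. \<forall>n\<ge>N. norm (pcf_coef a c0 c1 n * x ^ n) \<le> K * (\<rho> * \<bar>x\<bar>) ^ n"
      using mult_right_mono[OF K, of "\<bar>x\<bar> ^ _"]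
      by (auto simp: abs_mult power_abs power_mult_distrib mult.assoc)
    show "summable (\<lambda>n. K * (\<rho> * \<bar>x\<bar>) ^ n)"
      using \<open>\<rho> > 0\<close> \<open>\<rho> * \<bar>x\<bar> < 1\<close> by (intro summable_mult summable_geometric) simp
  qed
qed

lemma diffs_diffs_pcf_coef:
  "diffs (diffs (pcf_coef a c0 c1)) n =
     a * pcf_coef a c0 c1 n - (if 2 \<le> n then pcf_coef a c0 c1 (n - 2) / 4 else 0)"
proof -
  have "diffs (diffs (pcf_coef a c0 c1)) n =
      (real (n + 2) * real (n + 1)) * pcf_coef a c0 c1 (Suc (Suc n))"
    by (simp add: diffs_def del: pcf_coef.simps)
  also have "\<dots> = a * pcf_coef a c0 c1 n - (if 2 \<le> n then pcf_coef a c0 c1 (n - 2) / 4 else 0)"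
    by (simp del: of_nat_add)
  finally show ?thesis .
qed

lemma pcf_series_second_derivative:
  "(\<Sum>n. diffs (diffs (pcf_coef a c0 c1)) n * x ^ n) = (a - x^2 / 4) * (\<Sum>n. pcf_coef a c0 c1 n * x ^ n)"
proof -
  let ?c = "pcf_coef a c0 c1"
  define S where "S = (\<Sum>n. ?c n * x ^ n)"
  have S: "(\<lambda>n. ?c n * x ^ n) sums S"
    unfolding S_def using summable_pcf_coef by (rule summable_sums)
  define h where "h n = (if 2 \<le> n then ?c (n - 2) / 4 else 0) * x ^ n" for n
  have "(\<lambda>i. h (i + 2)) sums (x^2 / 4 * S)"
  proof -
    have "(\<lambda>i. h (i + 2)) = (\<lambda>i. x^2 / 4 * (?c i * x ^ i))"
      by (simp add: h_def power_add field_simps power2_eq_square)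
    then show ?thesis by (simp only: sums_mult[OF S])
  qed
  then have "h sums (x^2 / 4 * S + (\<Sum>i<2. h i))"
    by (simp only: sums_iff_shift)
  then have "h sums (x^2 / 4 * S)"
    by (simp add: h_def eval_nat_numeral)
  from sums_diff[OF sums_mult[OF S, of a] this]
  have "(\<lambda>n. diffs (diffs ?c) n * x ^ n) sums ((a - x^2 / 4) * S)"
    by (simp add: diffs_diffs_pcf_coef h_def left_diff_distrib mult.assoc)
  then show ?thesis unfolding S_def by (simp add: sums_iff)
qed

lemma weber_ode_solution_pcf_series:
  "weber_ode_solution a (\<lambda>x. \<Sum>n. pcf_coef a c0 c1 n * x ^ n)
     (\<lambda>x. \<Sum>n. diffs (pcf_coef a c0 c1) n * x ^ n)"
  unfolding weber_ode_solution_def pcf_series_second_derivative[symmetric]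
  using termdiffs_strong_converges_everywhere termdiff_converges_all summable_pcf_coef
  by blast

lemma weberW_ode_solution_explicit:
  "weber_ode_solution a (weberW a) (\<lambda>x. W0 a * (\<Sum>n. diffs (pcf_coef a 1 0) n * x ^ n)
                                        + W0' a * (\<Sum>n. diffs (pcf_coef a 0 1) n * x ^ n))"
  using weber_ode_solution_lincomb[OF weber_ode_solution_pcf_series weber_ode_solution_pcf_series]
  by (simp add: weberW_def[abs_def] pcf_w1_def pcf_w2_def)

lemma weberW_ode_solution: "weber_ode_solution a (weberW a) (deriv (weberW a))"
  using weberW_ode_solution_explicit
  by (metis (no_types, lifting) DERIV_imp_deriv ext weber_ode_solution_def)

lemma weberW_0: "weberW a 0 = W0 a"
  by (simp add: weberW_def pcf_w1_def pcf_w2_def)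

lemma deriv_weberW_0: "deriv (weberW a) 0 = W0' a"
proof -
  have "(weberW a has_real_derivative W0 a * (\<Sum>n. diffs (pcf_coef a 1 0) n * 0 ^ n)
                                    + W0' a * (\<Sum>n. diffs (pcf_coef a 0 1) n * 0 ^ n)) (at 0)"
    using weberW_ode_solution_explicit unfolding weber_ode_solution_def by blast
  then have "(weberW a has_real_derivative W0' a) (at 0)"
    by (simp add: diffs_def)
  then show ?thesis by (rule DERIV_imp_deriv)
qed

lemma Gamma_nonzero_Re_pos:
  fixes z :: complex
  assumes "0 < Re z"
  shows "Gamma z \<noteq> 0"
  using assms nonpos_Ints_subset_nonpos_Reals
  by (intro Gamma_nonzero) (auto simp: complex_nonpos_Reals_iff)

lemma W0_mult_W0': "W0 a * W0' a = - 1 / 2"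
proof -
  define g1 where "g1 = Gamma (1/4 + \<i> * complex_of_real (a/2))"
  define g2 where "g2 = Gamma (3/4 + \<i> * complex_of_real (a/2))"
  have "g1 \<noteq> 0" "g2 \<noteq> 0"
    unfolding g1_def g2_def by (simp_all add: Gamma_nonzero_Re_pos)
  then have "sqrt (cmod (g1 / g2)) * sqrt (cmod (g2 / g1)) = 1"
    by (simp add: real_sqrt_mult[symmetric] norm_divide)
  moreover have "2 powr (-3/4) * 2 powr (-1/4) = (1 / 2 :: real)"
  proof -
    have "2 powr (-3/4) * 2 powr (-1/4) = (2 :: real) powr (-1)"
      by (simp add: powr_add[symmetric])
    then show ?thesis by (simp add: powr_minus)
  qed
  moreover have "W0 a * W0' a =
      - (2 powr (-3/4) * 2 powr (-1/4)) * (sqrt (cmod (g1 / g2)) * sqrt (cmod (g2 / g1)))"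
    unfolding W0_def W0'_def g1_def g2_def by (simp add: algebra_simps)
  ultimately show ?thesis by simp
qed

section \<open>Nield-Kuznetsov functions\<close>

lemma weberW_reflect_ode_solution:
  "weber_ode_solution a (\<lambda>x. weberW a (- x)) (\<lambda>x. - deriv (weberW a) (- x))"
  by (rule weber_ode_solution_reflect[OF weberW_ode_solution])

lemma NW_hat_eq:
  "NW_hat a x = integral {0..} (\<lambda>t. weberW a (- t)) * weberW a x
              - integral {0..} (weberW a) * weberW a (- x) - NW a x"
proof -
  have tail: "integral {x..} (weberW a) = integral {0..} (weberW a) - oint 0 x (weberW a)"
    using weber_ode_solution_integrable_on_Ici[OF weberW_ode_solution]
    by (rule integral_Ici_eq_minus_oint)
  have tail_reflected: "integral {x..} (\<lambda>t. weberW a (- t))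
      = integral {0..} (\<lambda>t. weberW a (- t)) - oint 0 x (\<lambda>t. weberW a (- t))"
    using weber_ode_solution_integrable_on_Ici[OF weberW_reflect_ode_solution]
    by (rule integral_Ici_eq_minus_oint)
  show ?thesis
    unfolding NW_hat_def NW_def tail tail_reflected by (simp add: algebra_simps)
qed

lemma NW_has_real_derivative:
  "(NW a has_real_derivative deriv (weberW a) x * oint 0 x (\<lambda>t. weberW a (- t))
                           + deriv (weberW a) (- x) * oint 0 x (weberW a)) (at x)"
proof -
  have "(weberW a has_real_derivative deriv (weberW a) x) (at x)"
    and "((\<lambda>x. weberW a (- x)) has_real_derivative - deriv (weberW a) (- x)) (at x)"
    using weberW_ode_solution weberW_reflect_ode_solution unfolding weber_ode_solution_def by blast+
  moreover have "((\<lambda>x. oint 0 x (weberW a)) has_real_derivative weberW a x) (at x)"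
    and "((\<lambda>x. oint 0 x (\<lambda>t. weberW a (- t))) has_real_derivative weberW a (- x)) (at x)"
    using weber_ode_solution_continuous_on(1)[OF weberW_ode_solution]
      weber_ode_solution_continuous_on(1)[OF weberW_reflect_ode_solution]
    by (auto intro: has_real_derivative_oint)
  ultimately show ?thesis
    unfolding NW_def[abs_def] by (auto intro!: derivative_eq_intros simp: algebra_simps)
qed

theorem lemma2p2:
  fixes a x :: real
  shows "NW a x =
      (- deriv (NW_hat a) 0 * weberW a 0 - NW_hat a 0 * deriv (weberW a) 0) * weberW a x
    + (deriv (NW_hat a) 0 * weberW a 0 - NW_hat a 0 * deriv (weberW a) 0) * weberW a (-x)
    - NW_hat a x"
proof -
  define Ip where "Ip = integral {0..} (weberW a)"
  define Im where "Im = integral {0..} (\<lambda>t. weberW a (- t))"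
  have NW_hat: "NW_hat a = (\<lambda>x. Im * weberW a x - Ip * weberW a (- x) - NW a x)"
    unfolding Ip_def Im_def by (rule ext) (rule NW_hat_eq)
  have "(weberW a has_real_derivative W0' a) (at 0)"
    and "((\<lambda>x. weberW a (- x)) has_real_derivative - W0' a) (at 0)"
    using weberW_ode_solution[of a] weberW_reflect_ode_solution[of a]
    unfolding weber_ode_solution_def deriv_weberW_0[symmetric] by (metis minus_zero)+
  moreover have "(NW a has_real_derivative 0) (at 0)"
    using NW_has_real_derivative[of a 0] by (simp add: oint_def)
  ultimately have "(NW_hat a has_real_derivative Im * W0' a - Ip * (- W0' a) - 0) (at 0)"
    unfolding NW_hat by (intro DERIV_diff DERIV_cmult)
  then have deriv_0: "deriv (NW_hat a) 0 = (Im + Ip) * W0' a"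
    by (simp add: DERIV_imp_deriv algebra_simps)
  have value_0: "NW_hat a 0 = (Im - Ip) * W0 a"
    by (simp add: NW_hat NW_def oint_def weberW_0 algebra_simps)
  have "- deriv (NW_hat a) 0 * weberW a 0 - NW_hat a 0 * deriv (weberW a) 0 = - 2 * Im * (W0 a * W0' a)"
    and "deriv (NW_hat a) 0 * weberW a 0 - NW_hat a 0 * deriv (weberW a) 0 = 2 * Ip * (W0 a * W0' a)"
    unfolding deriv_0 value_0 weberW_0 deriv_weberW_0 by (simp_all add: algebra_simps)
  then show ?thesis by (simp add: W0_mult_W0' NW_hat)
qed

end
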